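(* Let $k$ be a measurable function on $[0,1]$ and suppose there are real constants $c,\mu,\nu,r$ with $c>0$ and $r>-1$ such that $ct^re^{\mu t}\le k(t)\le ct^re^{\nu t}$ for all $t\in[0,1]$. Let $p\in[1,\infty]$. Then for every $\delta\in(0,1)$, every $j\in\mathbb{N}$ and every polynomial $P$, $$\frac{P(n)\int_0^{1-\delta}k^{*(n-j)}(t)\,dt}{\|V_k^n\|_p}\to0\quad\text{as } n\to\infty \ (n\in\mathbb{N}).$$
   Context: For $f,g$ on $[0,1]$, $(f*g)(t)=\int_0^tf(t-s)g(s)\,ds$, and $f^{*n}$ is the $n$-fold convolution power. For $k\in L^1(0,1)$, $V_k$ is the operator on $L^p(0,1)$ given by $V_ku=k*u$, and $\|V_k^n\|_p$ is the operator norm of its $n$-th power on $L^p(0,1)$. (The paper writes the hypothesis as $r>1$, evidently intending $r>-1$.) *)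

theory Defs
  imports "HOL-Analysis.Analysis" "HOL-Probability.Essential_Supremum"
    "HOL-Computational_Algebra.Polynomial"
begin

definition conv :: "(real \<Rightarrow> real) \<Rightarrow> (real \<Rightarrow> real) \<Rightarrow> real \<Rightarrow> real" where
  "conv f g t = set_lebesgue_integral lebesgue {0..t} (\<lambda>s. f (t - s) * g s)"

text \<open>n-fold convolution power f^{*n} (n >= 1); the value for n = 0 is an
  irrelevant convention (only large n matter in the statement).\<close>
fun conv_pow :: "(real \<Rightarrow> real) \<Rightarrow> nat \<Rightarrow> real \<Rightarrow> real" where
  "conv_pow f 0 = (\<lambda>t. 0)"
| "conv_pow f (Suc 0) = f"
| "conv_pow f (Suc (Suc n)) = conv f (conv_pow f (Suc n))"

definition volterra :: "(real \<Rightarrow> real) \<Rightarrow> (real \<Rightarrow> real) \<Rightarrow> real \<Rightarrow> real" where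
  "volterra k u = conv k u"

definition lp_norm :: "ereal \<Rightarrow> (real \<Rightarrow> real) \<Rightarrow> ereal" where
  "lp_norm p u =
     (if p = \<infinity> then esssup (lebesgue_on {0..1}) (\<lambda>x. ereal \<bar>u x\<bar>)
      else (let N = nn_integral (lebesgue_on {0..1}) (\<lambda>x. ennreal (\<bar>u x\<bar> powr real_of_ereal p))
            in if N = \<infinity> then \<infinity> else ereal (enn2real N powr (1 / real_of_ereal p))))"

definition op_norm :: "ereal \<Rightarrow> ((real \<Rightarrow> real) \<Rightarrow> (real \<Rightarrow> real)) \<Rightarrow> ereal" where
  "op_norm p T = Sup {lp_norm p (T u) | u. u \<in> borel_measurable (lebesgue_on {0..1}) \<and> lp_norm p u \<le> 1}"

end

(*
  Write rho = r + 1.  By a Beta integral, convolution with k maps a function squeezed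
  between L t^alpha e^(mu t) and U t^alpha e^(nu t) on [0,1] to one squeezed in the same way
  with alpha raised by rho and L, U multiplied by c Gamma(rho) Gamma(alpha+1) / Gamma(alpha+1+rho).
  Hence the integral of the N-fold convolution power of k over [0, 1-delta] is at most a
  constant times (c Gamma(rho))^N (1-delta)^(N rho) / Gamma(N rho + 1).  Applying V_k^n to u(t) = t^beta,
  of norm at most 1, gives V_k^n u >= const (c Gamma(rho))^n a^(beta + n rho) / Gamma(beta + 1 + n rho)
  on [a,1] for a = 1 - delta/2, which bounds the operator norm from below.  Taking n = N + j and
  beta such that beta + 1 + j rho is an integer, the Gamma quotient is polynomial in n, so the
  ratio is at most a polynomial times ((1 - delta)/a)^(n rho), which decays geometrically.
*)
theory Submission
  imports Defs "HOL-Real_Asymp.Real_Asymp"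
begin

lemma has_integral_Beta_scaled:
  fixes t a b :: real
  assumes t: "t > 0" and a: "a > 0" and b: "b > 0"
  shows "((\<lambda>s. (t - s) powr (b - 1) * s powr (a - 1)) has_integral Beta a b * t powr (a + b - 1)) {0..t}"
proof -
  have "((\<lambda>x. x powr (a - 1) * (1 - x) powr (b - 1)) has_integral Beta a b) (cbox 0 1)"
    using has_integral_Beta_real[OF a b] by simp
  from has_integral_affinity[OF this, of "1/t" 0]
  have "((\<lambda>s. (s/t) powr (a - 1) * (1 - s/t) powr (b - 1)) has_integral t * Beta a b) ((\<lambda>x. t * x) ` {0..1})"
    using t by simp
  moreover have "(\<lambda>x. t * x) ` {0..1} = {0..t}"
    using t by (auto simp: image_iff intro!: bexI[where x="x/t" for x])
  ultimately have "((\<lambda>s. t powr (a + b - 2) * ((s/t) powr (a - 1) * (1 - s/t) powr (b - 1)))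
      has_integral t powr (a + b - 2) * (t * Beta a b)) {0..t}"
    by (intro has_integral_mult_right) simp
  moreover have "t powr (a + b - 2) * (t * Beta a b) = Beta a b * t powr (a + b - 1)"
    using t by (simp add: power2_eq_square powr_diff)
  moreover have "t powr (a + b - 2) * ((s/t) powr (a - 1) * (1 - s/t) powr (b - 1))
      = (t - s) powr (b - 1) * s powr (a - 1)" if "s \<in> {0..t}" for s
  proof -
    have "1 - s/t = (t - s)/t" using t by (simp add: field_simps)
    moreover have "t powr (a + b - 2) = t powr (a - 1) * t powr (b - 1)"
      by (simp add: powr_add[symmetric])
    ultimately show ?thesis using that t by (simp add: powr_divide field_simps)
  qed
  ultimately show ?thesis
    by (metis (no_types, lifting) has_integral_cong)
qed

lemma set_integral_Beta_scaled:
  fixes t a b :: real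
  assumes t: "t > 0" and a: "a > 0" and b: "b > 0"
  shows "set_integrable lebesgue {0..t} (\<lambda>s. (t - s) powr (b - 1) * s powr (a - 1))"
    and "(LINT s:{0..t}|lebesgue. (t - s) powr (b - 1) * s powr (a - 1)) = Beta a b * t powr (a + b - 1)"
proof -
  note h = has_integral_Beta_scaled[OF t a b]
  show i: "set_integrable lebesgue {0..t} (\<lambda>s. (t - s) powr (b - 1) * s powr (a - 1))"
    unfolding absolutely_integrable_on_def[symmetric]
    by (rule nonnegative_absolutely_integrable_1) (use h in auto)
  show "(LINT s:{0..t}|lebesgue. (t - s) powr (b - 1) * s powr (a - 1)) = Beta a b * t powr (a + b - 1)"
    using set_lebesgue_integral_eq_integral(2)[OF i] h by (simp add: integral_unique)
qed

lemma conv_at_0: "conv f g 0 = 0"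
proof -
  have "AE s in lebesgue. s \<noteq> (0::real)"
    by (rule AE_completion) (rule AE_lborel_singleton)
  then have "AE s in lebesgue. indicator {0..0::real} s *\<^sub>R (f (0 - s) * g s) = 0"
    by eventually_elim (auto simp: indicator_def)
  then show ?thesis
    unfolding conv_def set_lebesgue_integral_def by (rule integral_eq_zero_AE)
qed

lemma borel_measurable_conv:
  fixes f g :: "real \<Rightarrow> real"
  assumes [measurable]: "f \<in> borel_measurable borel" "g \<in> borel_measurable borel"
  shows "conv f g \<in> borel_measurable borel"
proof -
  define T :: "(real \<times> real) set" where "T = {z. 0 \<le> snd z \<and> snd z \<le> fst z}"
  have "(\<lambda>z. indicator T z *\<^sub>R (f (fst z - snd z) * g (snd z))) \<in> borel_measurable (borel \<Otimes>\<^sub>M lborel)"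
    unfolding T_def
    by (subst measurable_cong_sets[OF sets_pair_measure_cong[OF refl sets_lborel] refl]) measurable
  also have "(\<lambda>z. indicator T z *\<^sub>R (f (fst z - snd z) * g (snd z)))
      = (\<lambda>(t, s). indicator {0..t} s *\<^sub>R (f (t - s) * g s))"
    by (auto simp: fun_eq_iff indicator_def T_def)
  finally have "(\<lambda>t. LINT s|lborel. indicator {0..t} s *\<^sub>R (f (t - s) * g s)) \<in> borel_measurable borel"
    by (intro lborel.borel_measurable_lebesgue_integral) simp
  moreover have "conv f g = (\<lambda>t. LINT s|lborel. indicator {0..t} s *\<^sub>R (f (t - s) * g s))"
    unfolding conv_def set_lebesgue_integral_def by (intro ext integral_completion) measurable
  ultimately show ?thesis
    by simp
qed

lemma borel_measurable_funpow_conv: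
  fixes f g :: "real \<Rightarrow> real"
  assumes "f \<in> borel_measurable borel" "g \<in> borel_measurable borel"
  shows "(conv f ^^ n) g \<in> borel_measurable borel"
  by (induction n) (simp_all add: assms borel_measurable_conv)

lemma volterra_eq_conv: "volterra k = conv k"
  by (simp add: fun_eq_iff volterra_def)

lemma AE_lborel_reflect:
  fixes t :: real
  assumes "AE x in lborel. P x"
  shows "AE s in lborel. P (t - s)"
proof -
  from assms obtain N where N: "{x \<in> space lborel. \<not> P x} \<subseteq> N" "N \<in> null_sets lborel"
    by (rule AE_E) (metis null_setsI)
  have "AE x in lborel. x \<notin> N"
    using N(2) by (rule AE_not_in)
  then have "AE x in lborel. t + (-1) * x \<notin> N"
    by (intro AE_borel_affine) (use N(2) in \<open>auto simp: pred_def\<close>)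
  then show ?thesis
    by (rule AE_mp) (use N(1) in \<open>auto intro!: AE_I2\<close>)
qed

lemma conv_cong_AE:
  fixes f g f' g' :: "real \<Rightarrow> real"
  assumes [measurable]: "f' \<in> borel_measurable borel" "g' \<in> borel_measurable borel"
    and f: "AE x in lborel. x \<in> {0<..t} \<longrightarrow> f x = f' x"
    and g: "AE s in lborel. s \<in> {0..t} \<longrightarrow> g s = g' s"
  shows "conv f g t = conv f' g' t"
proof -
  have "AE s in lborel. indicator {0..t} s *\<^sub>R (f' (t - s) * g' s) = indicator {0..t} s *\<^sub>R (f (t - s) * g s)"
    using AE_lborel_reflect[OF f, of t] AE_lborel_singleton[of t] g
  proof eventually_elim
    case (elim s)
    then show ?case
      by (cases "s \<in> {0..t}") auto
  qed
  then have ae: "AE s in lebesgue.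
      indicator {0..t} s *\<^sub>R (f' (t - s) * g' s) = indicator {0..t} s *\<^sub>R (f (t - s) * g s)"
    by (rule AE_completion)
  have m': "(\<lambda>s. indicator {0..t} s *\<^sub>R (f' (t - s) * g' s)) \<in> borel_measurable lebesgue"
    by (rule measurable_completion) measurable
  show ?thesis
    unfolding conv_def set_lebesgue_integral_def
    by (rule integral_cong_AE[OF borel_measurable_AE[OF m' ae] m' AE_symmetric[OF ae]])
qed

lemma borel_representative_between:
  fixes k f g :: "real \<Rightarrow> real" and S T :: "real set"
  assumes k: "k \<in> borel_measurable (lebesgue_on S)" and S: "S \<in> sets borel"
    and T: "T \<in> sets borel" "T \<subseteq> S"
    and [measurable]: "f \<in> borel_measurable borel" "g \<in> borel_measurable borel"
    and between: "\<And>t. t \<in> T \<Longrightarrow> f t \<le> k t \<and> k t \<le> g t"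
  obtains kb where "kb \<in> borel_measurable borel" "\<And>t. t \<in> T \<Longrightarrow> f t \<le> kb t \<and> kb t \<le> g t"
    "\<And>t. t \<notin> T \<Longrightarrow> kb t = 0" "AE x in lborel. x \<in> T \<longrightarrow> k x = kb x"
proof -
  have "(\<lambda>x. indicator S x *\<^sub>R k x) \<in> borel_measurable lebesgue"
    using k S by (subst (asm) borel_measurable_restrict_space_iff) auto
  then obtain k0 where k0: "k0 \<in> borel_measurable lborel"
    and ae: "AE x in lborel. indicator S x *\<^sub>R k x = k0 x"
    using completion_ex_borel_measurable_real by blast
  have [measurable]: "k0 \<in> borel_measurable borel"
    using k0 by (simp add: measurable_lborel1)
  define kb where "kb x = (if x \<in> T then max (f x) (min (g x) (k0 x)) else 0)" for x
  have "kb \<in> borel_measurable borel"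
    unfolding kb_def using T(1) by measurable
  moreover have "f t \<le> kb t \<and> kb t \<le> g t" if "t \<in> T" for t
    using between[OF that] that by (auto simp: kb_def)
  moreover have "kb t = 0" if "t \<notin> T" for t
    using that by (simp add: kb_def)
  moreover have "AE x in lborel. x \<in> T \<longrightarrow> k x = kb x"
    using ae
  proof eventually_elim
    case (elim x)
    show ?case
    proof
      assume "x \<in> T"
      with elim T(2) have "k x = k0 x" by (auto simp: indicator_def)
      with between[OF \<open>x \<in> T\<close>] \<open>x \<in> T\<close> show "k x = kb x" by (auto simp: kb_def)
    qed
  qed
  ultimately show ?thesis
    using that by blast
qed

lemma exp_abs_bounds:
  fixes x t :: real
  assumes "t \<in> {0..1}"
  shows "exp (- \<bar>x\<bar>) \<le> exp (x * t)" "exp (x * t) \<le> exp \<bar>x\<bar>"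
proof -
  have "\<bar>x * t\<bar> \<le> \<bar>x\<bar>"
    using assms by (auto simp: abs_mult intro: mult_left_le)
  then show "exp (- \<bar>x\<bar>) \<le> exp (x * t)" "exp (x * t) \<le> exp \<bar>x\<bar>"
    by auto
qed

definition powr_exp_bounds :: "real \<Rightarrow> real \<Rightarrow> real \<Rightarrow> real \<Rightarrow> real \<Rightarrow> (real \<Rightarrow> real) \<Rightarrow> bool" where
  "powr_exp_bounds \<mu> \<nu> \<alpha> L U f \<longleftrightarrow>
     (\<forall>t\<in>{0..1}. L * t powr \<alpha> * exp (\<mu> * t) \<le> f t \<and> f t \<le> U * t powr \<alpha> * exp (\<nu> * t))"

lemma powr_exp_bounds_nonneg:
  assumes "powr_exp_bounds \<mu> \<nu> \<alpha> L U f" "L \<ge> 0" "t \<in> {0..1}"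
  shows "f t \<ge> 0"
  using assms unfolding powr_exp_bounds_def
  by (smt (verit) exp_gt_zero mult_nonneg_nonneg powr_ge_zero)

lemma powr_exp_bounds_upper_nonneg:
  assumes "powr_exp_bounds \<mu> \<nu> \<alpha> L U f" "L \<ge> 0"
  shows "U \<ge> 0"
proof -
  have "0 \<le> f 1" "f 1 \<le> U * exp \<nu>"
    using powr_exp_bounds_nonneg[OF assms, of 1] assms(1) unfolding powr_exp_bounds_def
    by (auto dest: bspec[of _ _ 1])
  then have "0 \<le> U * exp \<nu>"
    by linarith
  then show ?thesis
    by (simp add: zero_le_mult_iff)
qed

lemma powr_exp_bounds_powr:
  "powr_exp_bounds \<mu> \<nu> \<beta> (exp (- \<bar>\<mu>\<bar>)) (exp \<bar>\<nu>\<bar>) (\<lambda>t. t powr \<beta>)"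
  unfolding powr_exp_bounds_def
proof
  fix t :: real
  assume t: "t \<in> {0..1}"
  have "exp (- \<bar>\<mu>\<bar>) * exp (\<mu> * t) \<le> 1" "1 \<le> exp \<bar>\<nu>\<bar> * exp (\<nu> * t)"
    using exp_abs_bounds(2)[OF t, of \<mu>] exp_abs_bounds(1)[OF t, of \<nu>]
    by (simp_all add: exp_minus field_simps)
  then have "t powr \<beta> * (exp (- \<bar>\<mu>\<bar>) * exp (\<mu> * t)) \<le> t powr \<beta>"
    and "t powr \<beta> \<le> t powr \<beta> * (exp \<bar>\<nu>\<bar> * exp (\<nu> * t))"
    using mult_left_mono[of _ 1 "t powr \<beta>"] mult_left_mono[of 1 _ "t powr \<beta>"] by simp_all
  then show "exp (- \<bar>\<mu>\<bar>) * t powr \<beta> * exp (\<mu> * t) \<le> t powr \<beta> \<and> t powr \<beta> \<le> exp \<bar>\<nu>\<bar> * t powr \<beta> * exp (\<nu> * t)"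
    by (simp add: mult_ac)
qed

lemma powr_exp_bounds_ge:
  assumes "powr_exp_bounds \<mu> \<nu> \<alpha> L U f" "L \<ge> 0" "\<alpha> \<ge> 0" "0 \<le> a" "x \<in> {a..1}"
  shows "L * a powr \<alpha> * exp (- \<bar>\<mu>\<bar>) \<le> f x"
proof -
  have "a powr \<alpha> * exp (- \<bar>\<mu>\<bar>) \<le> x powr \<alpha> * exp (\<mu> * x)"
    using assms(3-5) exp_abs_bounds(1)[of x \<mu>] by (intro mult_mono powr_mono2) auto
  then have "L * a powr \<alpha> * exp (- \<bar>\<mu>\<bar>) \<le> L * x powr \<alpha> * exp (\<mu> * x)"
    using mult_left_mono[OF _ assms(2)] by (simp add: mult.assoc)
  also have "\<dots> \<le> f x"
    using assms(1,4,5) unfolding powr_exp_bounds_def by auto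
  finally show ?thesis .
qed

lemma powr_exp_bounds_conv_integrand:
  assumes f: "powr_exp_bounds \<mu> \<nu> \<alpha> L U f" and g: "powr_exp_bounds \<mu> \<nu> \<beta> L' U' g"
    and "L \<ge> 0" "L' \<ge> 0" "t \<le> 1" "s \<in> {0..t}"
  shows "L * L' * exp (\<mu> * t) * ((t - s) powr \<alpha> * s powr \<beta>) \<le> f (t - s) * g s"
    and "f (t - s) * g s \<le> U * U' * exp (\<nu> * t) * ((t - s) powr \<alpha> * s powr \<beta>)"
    and "0 \<le> f (t - s) * g s"
proof -
  have ts: "t - s \<in> {0..1}" "s \<in> {0..1}"
    using assms(5,6) by auto
  have f_ts: "L * (t - s) powr \<alpha> * exp (\<mu> * (t - s)) \<le> f (t - s)"
      "f (t - s) \<le> U * (t - s) powr \<alpha> * exp (\<nu> * (t - s))"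
    using f ts(1) unfolding powr_exp_bounds_def by auto
  have g_s: "L' * s powr \<beta> * exp (\<mu> * s) \<le> g s" "g s \<le> U' * s powr \<beta> * exp (\<nu> * s)"
    using g ts(2) unfolding powr_exp_bounds_def by auto
  have fg: "0 \<le> f (t - s)" "0 \<le> g s"
    using powr_exp_bounds_nonneg[OF f assms(3) ts(1)] powr_exp_bounds_nonneg[OF g assms(4) ts(2)] .
  have exp_split: "exp (x * t) = exp (x * (t - s)) * exp (x * s)" for x
    by (simp add: exp_add[symmetric] algebra_simps)
  have "(L * (t - s) powr \<alpha> * exp (\<mu> * (t - s))) * (L' * s powr \<beta> * exp (\<mu> * s)) \<le> f (t - s) * g s"
    using fg assms(4) by (intro mult_mono[OF f_ts(1) g_s(1)]) auto
  moreover have "f (t - s) * g s \<le> (U * (t - s) powr \<alpha> * exp (\<nu> * (t - s))) * (U' * s powr \<beta> * exp (\<nu> * s))"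
    using fg f_ts(2) by (intro mult_mono[OF f_ts(2) g_s(2)]) auto
  ultimately show "L * L' * exp (\<mu> * t) * ((t - s) powr \<alpha> * s powr \<beta>) \<le> f (t - s) * g s"
    and "f (t - s) * g s \<le> U * U' * exp (\<nu> * t) * ((t - s) powr \<alpha> * s powr \<beta>)"
    unfolding exp_split[of \<mu>] exp_split[of \<nu>] by (simp_all only: mult_ac)
  show "0 \<le> f (t - s) * g s"
    using fg by simp
qed

lemma conv_powr_exp_bounds:
  fixes f g :: "real \<Rightarrow> real"
  assumes [measurable]: "f \<in> borel_measurable borel" "g \<in> borel_measurable borel"
    and f: "powr_exp_bounds \<mu> \<nu> \<alpha> L U f" and g: "powr_exp_bounds \<mu> \<nu> \<beta> L' U' g"
    and "\<alpha> > -1" "\<beta> > -1" "L \<ge> 0" "L' \<ge> 0"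
  shows "powr_exp_bounds \<mu> \<nu> (\<alpha> + \<beta> + 1)
           (L * L' * Beta (\<beta> + 1) (\<alpha> + 1)) (U * U' * Beta (\<beta> + 1) (\<alpha> + 1)) (conv f g)"
  unfolding powr_exp_bounds_def
proof
  fix t :: real
  assume t: "t \<in> {0..1}"
  show "L * L' * Beta (\<beta> + 1) (\<alpha> + 1) * t powr (\<alpha> + \<beta> + 1) * exp (\<mu> * t) \<le> conv f g t \<and>
        conv f g t \<le> U * U' * Beta (\<beta> + 1) (\<alpha> + 1) * t powr (\<alpha> + \<beta> + 1) * exp (\<nu> * t)"
  proof (cases "t = 0")
    case True
    then show ?thesis by (simp add: conv_at_0)
  next
    case False
    with t have "t > 0" by auto
    define \<phi> where "\<phi> s = (t - s) powr \<alpha> * s powr \<beta>" for s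
    have \<phi>: "set_integrable lebesgue {0..t} \<phi>"
      "(LINT s:{0..t}|lebesgue. \<phi> s) = Beta (\<beta> + 1) (\<alpha> + 1) * t powr (\<alpha> + \<beta> + 1)"
      using set_integral_Beta_scaled[OF \<open>t > 0\<close>, of "\<beta> + 1" "\<alpha> + 1"] assms(5,6)
      unfolding \<phi>_def[abs_def] by (simp_all add: add_ac)
    note integrand = powr_exp_bounds_conv_integrand[OF f g assms(7,8), of t, folded \<phi>_def]
    have int_upper: "set_integrable lebesgue {0..t} (\<lambda>s. U * U' * exp (\<nu> * t) * \<phi> s)"
      using \<phi>(1) by simp
    have int_fg: "set_integrable lebesgue {0..t} (\<lambda>s. f (t - s) * g s)"
    proof (rule set_integrable_bound[OF int_upper])
      show "set_borel_measurable lebesgue {0..t} (\<lambda>s. f (t - s) * g s)"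
        unfolding set_borel_measurable_def by (rule measurable_completion) measurable
      show "AE s in lebesgue. s \<in> {0..t} \<longrightarrow> norm (f (t - s) * g s) \<le> norm (U * U' * exp (\<nu> * t) * \<phi> s)"
        using integrand(2,3) t by (intro AE_I2) force
    qed
    have "(LINT s:{0..t}|lebesgue. L * L' * exp (\<mu> * t) * \<phi> s) \<le> conv f g t"
      unfolding conv_def using \<phi>(1) integrand(1) t by (intro set_integral_mono[OF _ int_fg]) auto
    moreover have "conv f g t \<le> (LINT s:{0..t}|lebesgue. U * U' * exp (\<nu> * t) * \<phi> s)"
      unfolding conv_def using integrand(2) t by (intro set_integral_mono[OF int_fg int_upper]) auto
    ultimately show ?thesis
      using \<phi>(2) by (simp add: algebra_simps)
  qed
qed

lemma funpow_conv_powr_exp_bounds: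
  fixes f g :: "real \<Rightarrow> real"
  assumes [measurable]: "f \<in> borel_measurable borel" "g \<in> borel_measurable borel"
    and f: "powr_exp_bounds \<mu> \<nu> r c c f" and g: "powr_exp_bounds \<mu> \<nu> \<alpha> L U g"
    and "r > -1" "\<alpha> > -1" "c \<ge> 0" "L \<ge> 0"
  shows "powr_exp_bounds \<mu> \<nu> (\<alpha> + n * (r + 1))
           (L * (Gamma (\<alpha> + 1) * (c * Gamma (r + 1)) ^ n / Gamma (\<alpha> + 1 + n * (r + 1))))
           (U * (Gamma (\<alpha> + 1) * (c * Gamma (r + 1)) ^ n / Gamma (\<alpha> + 1 + n * (r + 1))))
           ((conv f ^^ n) g)"
proof (induction n)
  case 0
  have "Gamma (\<alpha> + 1) > 0" using \<open>\<alpha> > -1\<close> by simp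
  then show ?case using g by simp
next
  case (Suc n)
  define F where "F = Gamma (\<alpha> + 1) * (c * Gamma (r + 1)) ^ n / Gamma (\<alpha> + 1 + n * (r + 1))"
  have \<alpha>n: "\<alpha> + n * (r + 1) > -1"
    using assms(5,6) by (smt (verit) mult_nonneg_nonneg of_nat_0_le_iff)
  have "F \<ge> 0" unfolding F_def using assms(5-7) \<alpha>n by (simp add: add_ac)
  define F' where "F' = Gamma (\<alpha> + 1) * (c * Gamma (r + 1)) ^ Suc n / Gamma (\<alpha> + 1 + Suc n * (r + 1))"
  have F': "c * F * Beta (\<alpha> + n * (r + 1) + 1) (r + 1) = F'"
  proof -
    have "Gamma (\<alpha> + n * (r + 1) + 1) > 0" "Gamma (r + 1) > 0"
      using assms(5) \<alpha>n by auto
    then show ?thesis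
      unfolding F_def F'_def Beta_def by (simp add: field_simps add_ac)
  qed
  show ?case
    unfolding F'_def[symmetric] F'[symmetric]
    using conv_powr_exp_bounds[OF _ borel_measurable_funpow_conv f Suc.IH[folded F_def]] assms(5,7,8) \<alpha>n \<open>F \<ge> 0\<close>
    by (simp add: algebra_simps)
qed

lemma set_integral_powr_exp_bounds_le:
  fixes f :: "real \<Rightarrow> real"
  assumes [measurable]: "f \<in> borel_measurable borel"
    and f: "powr_exp_bounds \<mu> \<nu> \<alpha> L U f" and "L \<ge> 0" "\<alpha> > -1" and b: "0 \<le> b" "b \<le> 1"
  shows "\<bar>LINT t:{0..b}|lebesgue. f t\<bar> \<le> U * exp \<bar>\<nu>\<bar> * b powr (\<alpha> + 1) / (\<alpha> + 1)"
proof -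
  have nonneg: "0 \<le> f t" if "t \<in> {0..b}" for t
    using powr_exp_bounds_nonneg[OF f \<open>L \<ge> 0\<close>] that b by auto
  have "0 \<le> U"
    using powr_exp_bounds_upper_nonneg[OF f \<open>L \<ge> 0\<close>] .
  have upper: "f t \<le> U * exp \<bar>\<nu>\<bar> * t powr \<alpha>" if "t \<in> {0..b}" for t
  proof -
    have "f t \<le> U * t powr \<alpha> * exp (\<nu> * t)"
      using f that b unfolding powr_exp_bounds_def by auto
    also have "\<dots> \<le> U * t powr \<alpha> * exp \<bar>\<nu>\<bar>"
      using exp_abs_bounds(2)[of t \<nu>] that b \<open>0 \<le> U\<close> by (intro mult_left_mono) auto
    finally show ?thesis by (simp add: mult_ac)
  qed
  have powr: "((\<lambda>t. t powr \<alpha>) has_integral b powr (\<alpha> + 1) / (\<alpha> + 1)) {0..b}"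
    using has_integral_powr_from_0[OF \<open>\<alpha> > -1\<close> b(1)] .
  then have "set_integrable lebesgue {0..b} (\<lambda>t. t powr \<alpha>)"
    unfolding absolutely_integrable_on_def[symmetric]
    by (intro nonnegative_absolutely_integrable_1) auto
  then have int_powr: "set_integrable lebesgue {0..b} (\<lambda>t. U * exp \<bar>\<nu>\<bar> * t powr \<alpha>)"
    by (simp add: mult.assoc)
  have int_f: "set_integrable lebesgue {0..b} f"
  proof (rule set_integrable_bound[OF int_powr])
    show "set_borel_measurable lebesgue {0..b} f"
      unfolding set_borel_measurable_def by (rule measurable_completion) measurable
    show "AE t in lebesgue. t \<in> {0..b} \<longrightarrow> norm (f t) \<le> norm (U * exp \<bar>\<nu>\<bar> * t powr \<alpha>)"
      using upper nonneg by (intro AE_I2) force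
  qed
  have "0 \<le> (LINT t:{0..b}|lebesgue. f t)"
    using nonneg unfolding set_lebesgue_integral_def
    by (intro integral_nonneg_AE AE_I2) (auto simp: indicator_def)
  moreover have "(LINT t:{0..b}|lebesgue. f t) \<le> (LINT t:{0..b}|lebesgue. U * exp \<bar>\<nu>\<bar> * t powr \<alpha>)"
    by (rule set_integral_mono[OF int_f int_powr upper])
  moreover have "(LINT t:{0..b}|lebesgue. U * exp \<bar>\<nu>\<bar> * t powr \<alpha>) = U * exp \<bar>\<nu>\<bar> * (b powr (\<alpha> + 1) / (\<alpha> + 1))"
    using powr \<open>set_integrable lebesgue {0..b} (\<lambda>t. t powr \<alpha>)\<close>
    by (simp add: set_lebesgue_integral_eq_integral integral_unique mult.assoc)
  ultimately show ?thesis
    by simp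
qed

lemma emeasure_lebesgue_01_atLeastAtMost:
  "a \<in> {0..1} \<Longrightarrow> emeasure (lebesgue_on {0..1}) {a..1::real} = ennreal (1 - a)"
  by (subst emeasure_restrict_space) auto

lemma esssup_lebesgue_01_ge:
  fixes f :: "real \<Rightarrow> real"
  assumes a: "0 \<le> a" "a < 1" and bound: "\<And>x. x \<in> {a..1} \<Longrightarrow> m \<le> \<bar>f x\<bar>"
  shows "ereal m \<le> esssup (lebesgue_on {0..1}) (\<lambda>x. ereal \<bar>f x\<bar>)"
proof (cases "(\<lambda>x. ereal \<bar>f x\<bar>) \<in> borel_measurable (lebesgue_on {0..1})")
  case True
  show ?thesis
  proof (rule ccontr)
    assume "\<not> ?thesis"
    then have less: "esssup (lebesgue_on {0..1}) (\<lambda>x. ereal \<bar>f x\<bar>) < ereal m"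
      by simp
    have "AE x in lebesgue_on {0..1}. x \<notin> {a..1}"
      using esssup_AE[of "\<lambda>x. ereal \<bar>f x\<bar>" "lebesgue_on {0..1}"]
    proof eventually_elim
      case (elim x)
      then show ?case
        using le_less_trans[OF elim less] bound[of x] by auto
    qed
    then have "emeasure (lebesgue_on {0..1}) {a..1} = 0"
      by (subst (asm) AE_iff_measurable[of "{a..1}"]) (use a in \<open>auto simp: sets_restrict_space_iff\<close>)
    with emeasure_lebesgue_01_atLeastAtMost[of a] a show False
      by simp
  qed
qed (simp add: esssup_non_measurable)

lemma lp_norm_le_1:
  fixes u :: "real \<Rightarrow> real" and p :: ereal
  assumes p: "1 \<le> p" and u: "u \<in> borel_measurable (lebesgue_on {0..1})"
    and bounded: "\<And>x. x \<in> {0..1} \<Longrightarrow> \<bar>u x\<bar> \<le> 1"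
  shows "lp_norm p u \<le> 1"
proof (cases "p = \<infinity>")
  case True
  have "esssup (lebesgue_on {0..1}) (\<lambda>x. ereal \<bar>u x\<bar>) \<le> 1"
    by (rule esssup_I) (use u bounded in \<open>auto intro!: AE_I2\<close>)
  then show ?thesis using True by (simp add: lp_norm_def)
next
  case False
  define q where "q = real_of_ereal p"
  have q: "q \<ge> 1" using p False unfolding q_def by (cases p) auto
  define N where "N = nn_integral (lebesgue_on {0..1}) (\<lambda>x. ennreal (\<bar>u x\<bar> powr q))"
  have "N \<le> nn_integral (lebesgue_on {0..1::real}) (\<lambda>x. 1)"
    unfolding N_def by (rule nn_integral_mono) (use bounded q in \<open>auto simp: powr_le1\<close>)
  also have "\<dots> = 1"
    by (simp add: nn_integral_const emeasure_restrict_space)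
  finally have "N \<le> 1" .
  then have "N \<noteq> \<infinity>" and "enn2real N powr (1/q) \<le> 1"
    using q enn2real_mono[of N 1] by (auto simp: top_unique intro!: powr_le1)
  then show ?thesis using False unfolding lp_norm_def by (simp add: Let_def N_def q_def)
qed

lemma lp_norm_ge:
  fixes f :: "real \<Rightarrow> real" and p :: ereal
  assumes p: "1 \<le> p" and a: "0 \<le> a" "a < 1" and m: "m \<ge> 0"
    and bound: "\<And>x. x \<in> {a..1} \<Longrightarrow> m \<le> \<bar>f x\<bar>"
  shows "ereal (m * (1 - a)) \<le> lp_norm p f"
proof (cases "p = \<infinity>")
  case True
  have "ereal (m * (1 - a)) \<le> ereal m"
    using a m by (simp add: mult_left_le)
  also have "\<dots> \<le> esssup (lebesgue_on {0..1}) (\<lambda>x. ereal \<bar>f x\<bar>)"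
    by (rule esssup_lebesgue_01_ge[OF a bound])
  finally show ?thesis
    using True by (simp add: lp_norm_def)
next
  case False
  define q where "q = real_of_ereal p"
  have q: "q \<ge> 1" using p False unfolding q_def by (cases p) auto
  define N where "N = nn_integral (lebesgue_on {0..1}) (\<lambda>x. ennreal (\<bar>f x\<bar> powr q))"
  have "ennreal (m powr q * (1 - a)) = nn_integral (lebesgue_on {0..1}) (\<lambda>x. ennreal (m powr q) * indicator {a..1} x)"
    using a by (subst nn_integral_cmult_indicator)
      (auto simp: sets_restrict_space_iff emeasure_lebesgue_01_atLeastAtMost ennreal_mult)
  also have "\<dots> \<le> N"
    unfolding N_def using bound m q
    by (intro nn_integral_mono) (auto simp: indicator_def intro!: ennreal_leI powr_mono2)
  finally have N_ge: "ennreal (m powr q * (1 - a)) \<le> N" .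
  show ?thesis
  proof (cases "N = \<infinity>")
    case True
    then show ?thesis using False unfolding lp_norm_def by (simp add: Let_def N_def q_def)
  next
    case N_finite: False
    have "1 - a \<le> (1 - a) powr (1/q)"
      using powr_mono'[of "1/q" 1 "1 - a"] q a by simp
    then have "m * (1 - a) \<le> m * (1 - a) powr (1/q)"
      using m by (rule mult_left_mono)
    also have "\<dots> = (m powr q * (1 - a)) powr (1/q)"
      using q a m by (simp add: powr_mult powr_powr)
    also have "\<dots> \<le> enn2real N powr (1/q)"
      using enn2real_mono[OF N_ge] N_finite q a by (intro powr_mono2) (auto simp: less_top)
    finally show ?thesis
      using False N_finite unfolding lp_norm_def by (simp add: Let_def N_def q_def)
  qed
qed

lemma lp_norm_le_op_norm:
  assumes "u \<in> borel_measurable (lebesgue_on {0..1})" "lp_norm p u \<le> 1"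
  shows "lp_norm p (T u) \<le> op_norm p T"
  unfolding op_norm_def using assms by (intro Sup_upper) blast

(* Also covers E = \<infinity>, where real_of_ereal E = 0 and the quotient is 0. *)
lemma abs_divide_real_of_ereal_le:
  fixes x A m :: real and E :: ereal
  assumes "\<bar>x\<bar> \<le> A" "0 < m" "ereal m \<le> E"
  shows "\<bar>x / real_of_ereal E\<bar> \<le> A / m"
proof (cases E)
  case (real d)
  with assms have "m \<le> d" by simp
  with assms show ?thesis
    unfolding real by (simp add: frac_le)
qed (use assms in auto)

lemma Gamma_plus_of_nat_div_le:
  fixes x y :: real
  assumes "0 < x" "x \<le> y"
  shows "Gamma (x + real m) / Gamma x \<le> (y + real m) ^ m"
proof (induction m)
  case (Suc m)
  have "x + real m \<notin> \<int>\<^sub>\<le>\<^sub>0"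
    using assms by (auto elim!: nonpos_Ints_cases)
  then have "Gamma (x + real (Suc m)) / Gamma x = (x + real m) * (Gamma (x + real m) / Gamma x)"
    using Gamma_plus1[of "x + real m"] by (simp add: add_ac)
  also have "\<dots> \<le> (y + real (Suc m)) * (y + real (Suc m)) ^ m"
    using Suc assms
    by (intro mult_mono order_trans[OF Suc.IH power_mono]) (auto intro: less_imp_le[OF Gamma_real_pos])
  finally show ?case
    by simp
qed simp

lemma abs_poly_le:
  fixes P :: "real poly"
  shows "\<bar>poly P x\<bar> \<le> (\<Sum>i\<le>degree P. \<bar>coeff P i\<bar>) * (1 + \<bar>x\<bar>) ^ degree P"
proof -
  have "\<bar>poly P x\<bar> \<le> (\<Sum>i\<le>degree P. \<bar>coeff P i * x ^ i\<bar>)"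
    unfolding poly_altdef by (rule sum_abs)
  also have "\<dots> \<le> (\<Sum>i\<le>degree P. \<bar>coeff P i\<bar> * (1 + \<bar>x\<bar>) ^ degree P)"
  proof (rule sum_mono)
    fix i assume "i \<in> {..degree P}"
    then have "\<bar>x\<bar> ^ i \<le> (1 + \<bar>x\<bar>) ^ degree P"
      by (intro order_trans[OF power_mono power_increasing]) auto
    then show "\<bar>coeff P i * x ^ i\<bar> \<le> \<bar>coeff P i\<bar> * (1 + \<bar>x\<bar>) ^ degree P"
      by (simp add: abs_mult power_abs mult_left_mono)
  qed
  also have "\<dots> = (\<Sum>i\<le>degree P. \<bar>coeff P i\<bar>) * (1 + \<bar>x\<bar>) ^ degree P"
    by (simp add: sum_distrib_right)
  finally show ?thesis .
qed

lemma poly_times_power_tendsto_0: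
  fixes P :: "real poly" and q :: real
  assumes "\<bar>q\<bar> < 1"
  shows "(\<lambda>n. poly P (real n) * q ^ n) \<longlonglongrightarrow> 0"
proof (rule Lim_null_comparison)
  define S where "S = (\<Sum>i\<le>degree P. \<bar>coeff P i\<bar>)"
  show "\<forall>\<^sub>F n in sequentially. norm (poly P (real n) * q ^ n) \<le> S * (1 + real n) ^ degree P * \<bar>q\<bar> ^ n"
  proof (intro always_eventually allI)
    fix n
    have "\<bar>poly P (real n)\<bar> \<le> S * (1 + real n) ^ degree P"
      using abs_poly_le[of P "real n"] by (simp add: S_def)
    then show "norm (poly P (real n) * q ^ n) \<le> S * (1 + real n) ^ degree P * \<bar>q\<bar> ^ n"
      by (simp add: abs_mult power_abs mult_right_mono)
  qed
  show "(\<lambda>n. S * (1 + real n) ^ degree P * \<bar>q\<bar> ^ n) \<longlonglongrightarrow> 0"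
  proof (cases "q = 0")
    case False
    then show ?thesis using assms by real_asymp
  qed (simp add: LIMSEQ_imp_Suc)
qed

lemma poly_mult_tendsto_0_of_poly_geometric_bound:
  fixes P Q :: "real poly" and R :: "nat \<Rightarrow> real"
  assumes q: "0 \<le> q" "q < 1" and bound: "\<forall>\<^sub>F n in sequentially. \<bar>R n\<bar> \<le> \<bar>poly Q (real n)\<bar> * q ^ n"
  shows "(\<lambda>n. poly P (real n) * R n) \<longlonglongrightarrow> 0"
proof (rule Lim_null_comparison)
  show "(\<lambda>n. \<bar>poly (P * Q) (real n) * q ^ n\<bar>) \<longlonglongrightarrow> 0"
    using q by (intro tendsto_rabs_zero poly_times_power_tendsto_0) simp
  show "\<forall>\<^sub>F n in sequentially. norm (poly P (real n) * R n) \<le> \<bar>poly (P * Q) (real n) * q ^ n\<bar>"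
    using bound
  proof eventually_elim
    case (elim n)
    then have "\<bar>poly P (real n)\<bar> * \<bar>R n\<bar> \<le> \<bar>poly P (real n)\<bar> * (\<bar>poly Q (real n)\<bar> * q ^ n)"
      by (rule mult_left_mono) simp
    then show ?case
      using q by (simp add: abs_mult)
  qed
qed

(* Convolution only sees k up to null sets; the Borel representative kb makes
   (t, s) \<mapsto> kb (t - s) * g s jointly measurable. *)
locale powr_exp_kernel =
  fixes k kb :: "real \<Rightarrow> real" and c r \<mu> \<nu> :: real
  assumes kb_borel [measurable]: "kb \<in> borel_measurable borel"
    and c_pos: "c > 0" and r_gt: "r > -1"
    and kb_bounds: "powr_exp_bounds \<mu> \<nu> r c c kb"
    and AE_eq: "AE x in lborel. x \<in> {0<..1} \<longrightarrow> k x = kb x"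
begin

lemma AE_eq_on: "t \<le> 1 \<Longrightarrow> AE x in lborel. x \<in> {0<..t} \<longrightarrow> k x = kb x"
  using AE_eq by eventually_elim auto

lemma funpow_volterra_eq_funpow_conv:
  assumes [measurable]: "u \<in> borel_measurable borel" and "t \<le> 1"
  shows "(volterra k ^^ n) u t = (conv kb ^^ n) u t"
  using \<open>t \<le> 1\<close> unfolding volterra_eq_conv
proof (induction n arbitrary: t)
  case (Suc n)
  have "conv k ((conv k ^^ n) u) t = conv kb ((conv kb ^^ n) u) t"
    using Suc by (intro conv_cong_AE AE_eq_on borel_measurable_funpow_conv kb_borel AE_I2) auto
  then show ?case
    by simp
qed simp

lemma conv_pow_eq_funpow_conv:
  assumes "t \<le> 1"
  shows "conv_pow k (Suc (Suc m)) t = (conv kb ^^ Suc m) kb t"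
  using assms
proof (induction m arbitrary: t)
  case 0
  have "AE s in lborel. s \<in> {0..t} \<longrightarrow> k s = kb s"
    using AE_eq AE_lborel_singleton[of 0] by eventually_elim (use 0 in auto)
  then have "conv k k t = conv kb kb t"
    using 0 by (intro conv_cong_AE AE_eq_on kb_borel)
  then show ?case
    by simp
next
  case (Suc m)
  have "conv k (conv_pow k (Suc (Suc m))) t = conv kb ((conv kb ^^ Suc m) kb) t"
    using Suc by (intro conv_cong_AE AE_eq_on borel_measurable_funpow_conv kb_borel AE_I2) auto
  then show ?case
    by simp
qed

lemma funpow_conv_kernel_powr_exp_bounds:
  fixes m :: nat
  defines "F \<equiv> (c * Gamma (r + 1)) ^ Suc m / Gamma (Suc m * (r + 1))"
  shows "powr_exp_bounds \<mu> \<nu> (Suc m * (r + 1) - 1) F F ((conv kb ^^ m) kb)"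
proof -
  have "powr_exp_bounds \<mu> \<nu> (r + m * (r + 1))
      (c * (Gamma (r + 1) * (c * Gamma (r + 1)) ^ m / Gamma (r + 1 + m * (r + 1))))
      (c * (Gamma (r + 1) * (c * Gamma (r + 1)) ^ m / Gamma (r + 1 + m * (r + 1))))
      ((conv kb ^^ m) kb)"
    using c_pos r_gt by (intro funpow_conv_powr_exp_bounds kb_bounds) auto
  moreover have "r + m * (r + 1) = Suc m * (r + 1) - 1"
    by (simp add: algebra_simps)
  moreover have "c * (Gamma (r + 1) * (c * Gamma (r + 1)) ^ m / Gamma (r + 1 + m * (r + 1))) = F"
    unfolding F_def by (simp add: algebra_simps)
  ultimately show ?thesis
    by simp
qed

lemma abs_integral_conv_pow_le:
  assumes "N \<ge> 2" "0 \<le> b" "b \<le> 1"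
  shows "\<bar>LINT t:{0..b}|lebesgue. conv_pow k N t\<bar>
           \<le> exp \<bar>\<nu>\<bar> * (c * Gamma (r + 1)) ^ N * b powr (N * (r + 1)) / Gamma (N * (r + 1) + 1)"
proof -
  obtain m where N: "N = Suc (Suc m)"
    using assms(1) by (metis add_2_eq_Suc le_Suc_ex)
  define F where "F = (c * Gamma (r + 1)) ^ N / Gamma (N * (r + 1))"
  have "N * (r + 1) > 0"
    using assms(1) r_gt by simp
  have eq: "(LINT t:{0..b}|lebesgue. conv_pow k N t) = (LINT t:{0..b}|lebesgue. (conv kb ^^ Suc m) kb t)"
    using assms(3) conv_pow_eq_funpow_conv[of _ m] unfolding N
    by (intro set_lebesgue_integral_cong) (auto simp del: conv_pow.simps funpow.simps)
  have bounds: "powr_exp_bounds \<mu> \<nu> (N * (r + 1) - 1) F F ((conv kb ^^ Suc m) kb)"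
    using funpow_conv_kernel_powr_exp_bounds[of "Suc m"] unfolding F_def N .
  have "F \<ge> 0"
    unfolding F_def using c_pos r_gt \<open>N * (r + 1) > 0\<close> by simp
  have "\<bar>LINT t:{0..b}|lebesgue. (conv kb ^^ Suc m) kb t\<bar>
      \<le> F * exp \<bar>\<nu>\<bar> * b powr (N * (r + 1) - 1 + 1) / (N * (r + 1) - 1 + 1)"
    using \<open>N * (r + 1) > 0\<close> assms
    by (intro set_integral_powr_exp_bounds_le[OF borel_measurable_funpow_conv bounds \<open>F \<ge> 0\<close>]) auto
  also have "\<dots> = exp \<bar>\<nu>\<bar> * (c * Gamma (r + 1)) ^ N * b powr (N * (r + 1)) / Gamma (N * (r + 1) + 1)"
  proof -
    have "N * (r + 1) \<notin> \<int>\<^sub>\<le>\<^sub>0"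
      using \<open>N * (r + 1) > 0\<close> by (auto elim!: nonpos_Ints_cases)
    then have "Gamma (N * (r + 1) + 1) = N * (r + 1) * Gamma (N * (r + 1))"
      by (rule Gamma_plus1)
    moreover have "Gamma (N * (r + 1)) > 0"
      using \<open>N * (r + 1) > 0\<close> by (rule Gamma_real_pos)
    ultimately show ?thesis
      using \<open>N * (r + 1) > 0\<close> by (simp add: F_def field_simps)
  qed
  finally show ?thesis
    unfolding eq .
qed

lemma op_norm_funpow_volterra_ge:
  assumes p: "1 \<le> p" and "\<beta> \<ge> 0" "0 < a" "a < 1"
  shows "ereal (exp (- 2 * \<bar>\<mu>\<bar>) * Gamma (\<beta> + 1) * (c * Gamma (r + 1)) ^ n * a powr (\<beta> + n * (r + 1)) * (1 - a)
                / Gamma (\<beta> + 1 + n * (r + 1)))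
         \<le> op_norm p (volterra k ^^ n)"
proof -
  define u where "u t = t powr \<beta>" for t :: real
  define F where "F = Gamma (\<beta> + 1) * (c * Gamma (r + 1)) ^ n / Gamma (\<beta> + 1 + n * (r + 1))"
  define m where "m = exp (- 2 * \<bar>\<mu>\<bar>) * F * a powr (\<beta> + n * (r + 1))"
  have [measurable]: "u \<in> borel_measurable borel"
    unfolding u_def by measurable
  have "\<beta> + n * (r + 1) \<ge> 0"
    using assms(2) r_gt by simp
  moreover have "Gamma (\<beta> + 1) > 0" "Gamma (r + 1) > 0" "Gamma (\<beta> + 1 + n * (r + 1)) > 0"
    using assms(2) r_gt \<open>\<beta> + n * (r + 1) \<ge> 0\<close> by (simp_all add: Gamma_real_pos add_pos_nonneg)
  ultimately have "F > 0" "m > 0"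
    unfolding m_def F_def using assms(3) c_pos by simp_all
  have bounds: "powr_exp_bounds \<mu> \<nu> (\<beta> + n * (r + 1)) (exp (- \<bar>\<mu>\<bar>) * F) (exp \<bar>\<nu>\<bar> * F) ((conv kb ^^ n) u)"
    using c_pos r_gt assms(2) unfolding u_def F_def
    by (intro funpow_conv_powr_exp_bounds kb_bounds powr_exp_bounds_powr) auto
  have "m \<le> \<bar>(volterra k ^^ n) u x\<bar>" if "x \<in> {a..1}" for x
  proof -
    have "exp (- \<bar>\<mu>\<bar>) * F * a powr (\<beta> + n * (r + 1)) * exp (- \<bar>\<mu>\<bar>) \<le> (conv kb ^^ n) u x"
      using \<open>F > 0\<close> \<open>\<beta> + n * (r + 1) \<ge> 0\<close> assms(3) that
      by (intro powr_exp_bounds_ge[OF bounds]) auto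
    moreover have "exp (- \<bar>\<mu>\<bar>) * F * a powr (\<beta> + n * (r + 1)) * exp (- \<bar>\<mu>\<bar>) = m"
      unfolding m_def by (simp add: mult_ac flip: exp_add)
    ultimately have "m \<le> (conv kb ^^ n) u x"
      by simp
    then show ?thesis
      using funpow_volterra_eq_funpow_conv[of u x n] that by simp
  qed
  then have "ereal (m * (1 - a)) \<le> lp_norm p ((volterra k ^^ n) u)"
    using \<open>m > 0\<close> assms by (intro lp_norm_ge) auto
  also have "\<dots> \<le> op_norm p (volterra k ^^ n)"
  proof (rule lp_norm_le_op_norm)
    show "u \<in> borel_measurable (lebesgue_on {0..1})"
      by (intro measurable_restrict_space1 measurable_completion) simp
    then show "lp_norm p u \<le> 1"
      using assms(2) by (intro lp_norm_le_1[OF p]) (auto simp: u_def powr_le1)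
  qed
  finally show ?thesis
    by (simp add: m_def F_def mult.assoc)
qed

lemma abs_integral_conv_pow_div_op_norm_le:
  assumes p: "1 \<le> p" and "N \<ge> 2" "0 \<le> b" "b \<le> 1" "\<beta> \<ge> 0" "0 < a" "a < 1"
  shows "\<bar>(LINT t:{0..b}|lebesgue. conv_pow k N t) / real_of_ereal (op_norm p (volterra k ^^ (N + j)))\<bar>
           \<le> exp (\<bar>\<nu>\<bar> + 2 * \<bar>\<mu>\<bar>) / (Gamma (\<beta> + 1) * (c * Gamma (r + 1)) ^ j * (1 - a))
              * (Gamma (\<beta> + 1 + real (N + j) * (r + 1)) / Gamma (N * (r + 1) + 1))
              * (b powr (N * (r + 1)) / a powr (\<beta> + real (N + j) * (r + 1)))"
proof -
  define X where "X = c * Gamma (r + 1)"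
  define A where "A = exp \<bar>\<nu>\<bar> * X ^ N * b powr (N * (r + 1)) / Gamma (N * (r + 1) + 1)"
  define D where "D = exp (- 2 * \<bar>\<mu>\<bar>) * Gamma (\<beta> + 1) * X ^ (N + j) * a powr (\<beta> + real (N + j) * (r + 1)) * (1 - a)
                        / Gamma (\<beta> + 1 + real (N + j) * (r + 1))"
  have "X > 0" "N * (r + 1) > 0" "\<beta> + 1 + real (N + j) * (r + 1) > 0"
    using c_pos r_gt assms(2,5) by (simp_all add: X_def add_pos_nonneg)
  then have Gammas: "Gamma (\<beta> + 1) > 0" "Gamma (N * (r + 1) + 1) > 0" "Gamma (\<beta> + 1 + real (N + j) * (r + 1)) > 0"
    using assms(5) by (simp_all add: Gamma_real_pos)
  have "D > 0"
    unfolding D_def using Gammas \<open>X > 0\<close> assms(6,7) by simp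
  have "\<bar>LINT t:{0..b}|lebesgue. conv_pow k N t\<bar> \<le> A"
    using abs_integral_conv_pow_le[OF assms(2-4)] by (simp add: A_def X_def)
  moreover have "ereal D \<le> op_norm p (volterra k ^^ (N + j))"
    using op_norm_funpow_volterra_ge[OF p assms(5-7), of "N + j"] by (simp add: D_def X_def)
  ultimately have "\<bar>(LINT t:{0..b}|lebesgue. conv_pow k N t) / real_of_ereal (op_norm p (volterra k ^^ (N + j)))\<bar> \<le> A / D"
    using \<open>D > 0\<close> by (intro abs_divide_real_of_ereal_le)
  also have "A / D = exp (\<bar>\<nu>\<bar> + 2 * \<bar>\<mu>\<bar>) / (Gamma (\<beta> + 1) * X ^ j * (1 - a))
      * (Gamma (\<beta> + 1 + real (N + j) * (r + 1)) / Gamma (N * (r + 1) + 1))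
      * (b powr (N * (r + 1)) / a powr (\<beta> + real (N + j) * (r + 1)))"
    using Gammas \<open>X > 0\<close> assms(6,7)
    by (simp add: A_def D_def exp_add exp_minus power_add field_simps)
  finally show ?thesis
    unfolding X_def .
qed

lemma integral_conv_pow_div_op_norm_le:
  fixes p :: ereal and \<delta> :: real and j :: nat
  assumes p: "1 \<le> p" and \<delta>: "0 < \<delta>" "\<delta> < 1"
  obtains Q :: "real poly" and q :: real where "0 < q" "q < 1"
    "\<And>n. n \<ge> j + 2 \<Longrightarrow>
       \<bar>(LINT t:{0..1 - \<delta>}|lebesgue. conv_pow k (n - j) t) / real_of_ereal (op_norm p (volterra k ^^ n))\<bar>
         \<le> \<bar>poly Q (real n)\<bar> * q ^ n"
proof -
  define \<rho> where "\<rho> = r + 1"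
  define M where "M = nat \<lceil>j * \<rho>\<rceil> + 1"
  define \<beta> where "\<beta> = M - j * \<rho> - 1"
  define a where "a = 1 - \<delta> / 2"
  define q where "q = ((1 - \<delta>) / a) powr \<rho>"
  define K where "K = exp (\<bar>\<nu>\<bar> + 2 * \<bar>\<mu>\<bar>) / (Gamma (\<beta> + 1) * (c * Gamma \<rho>) ^ j * (1 - a))"
  define C where "C = K / ((1 - \<delta>) powr (j * \<rho>) * a powr \<beta>)"
  have "\<rho> > 0" "\<beta> \<ge> 0" "0 < a" "a < 1" "1 - \<delta> < a"
    using r_gt \<delta> real_nat_ceiling_ge[of "j * \<rho>"] by (auto simp: \<rho>_def \<beta>_def M_def a_def)
  then have "K \<ge> 0" "C \<ge> 0" "0 < q" "q < 1"
    using \<delta> c_pos powr_less_mono2[of \<rho> "(1 - \<delta>) / a" 1] by (auto simp: K_def C_def q_def)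
  show ?thesis
  proof (rule that[of q "smult C ([:real M, \<rho>:] ^ (M - 1))"])
    fix n :: nat
    assume "n \<ge> j + 2"
    define N where "N = n - j"
    have "N \<ge> 2" "n = N + j"
      using \<open>n \<ge> j + 2\<close> by (simp_all add: N_def)
    have "real (M - 1) = real M - 1"
      by (simp add: M_def)
    then have "N * \<rho> + 1 + real (M - 1) = \<beta> + 1 + n * \<rho>" "n * \<rho> + 1 + real (M - 1) = n * \<rho> + M"
      by (simp_all add: \<beta>_def \<open>n = N + j\<close> algebra_simps)
    moreover have "0 < N * \<rho> + 1" "N * \<rho> + 1 \<le> n * \<rho> + 1"
      using \<open>\<rho> > 0\<close> by (simp_all add: \<open>n = N + j\<close> add_pos_nonneg algebra_simps)
    ultimately have Gamma_quotient: "Gamma (\<beta> + 1 + n * \<rho>) / Gamma (N * \<rho> + 1) \<le> (n * \<rho> + M) ^ (M - 1)"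
      using Gamma_plus_of_nat_div_le[of "N * \<rho> + 1" "n * \<rho> + 1" "M - 1"] by simp
    have powr_quotient: "(1 - \<delta>) powr (N * \<rho>) / a powr (\<beta> + n * \<rho>) = q ^ n / ((1 - \<delta>) powr (j * \<rho>) * a powr \<beta>)"
      using \<delta> \<open>0 < a\<close> \<open>n = N + j\<close>
      by (simp add: q_def powr_add powr_divide powr_powr powr_realpow[symmetric] field_simps)
    have "\<bar>(LINT t:{0..1 - \<delta>}|lebesgue. conv_pow k N t) / real_of_ereal (op_norm p (volterra k ^^ n))\<bar>
        \<le> K * (Gamma (\<beta> + 1 + n * \<rho>) / Gamma (N * \<rho> + 1)) * ((1 - \<delta>) powr (N * \<rho>) / a powr (\<beta> + n * \<rho>))"
      using abs_integral_conv_pow_div_op_norm_le[OF p \<open>N \<ge> 2\<close> _ _ \<open>\<beta> \<ge> 0\<close> \<open>0 < a\<close> \<open>a < 1\<close>, of "1 - \<delta>"] \<delta>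
      by (simp add: K_def \<rho>_def \<open>n = N + j\<close>)
    also have "\<dots> \<le> K * (n * \<rho> + M) ^ (M - 1) * ((1 - \<delta>) powr (N * \<rho>) / a powr (\<beta> + n * \<rho>))"
      using Gamma_quotient \<open>K \<ge> 0\<close> by (intro mult_right_mono mult_left_mono) auto
    also have "\<dots> = C * (n * \<rho> + M) ^ (M - 1) * q ^ n"
      unfolding powr_quotient by (simp add: C_def)
    also have "\<dots> = \<bar>poly (smult C ([:real M, \<rho>:] ^ (M - 1))) (real n)\<bar> * q ^ n"
      using \<open>C \<ge> 0\<close> \<open>\<rho> > 0\<close> by (simp add: poly_power algebra_simps)
    finally show "\<bar>(LINT t:{0..1 - \<delta>}|lebesgue. conv_pow k (n - j) t) / real_of_ereal (op_norm p (volterra k ^^ n))\<bar>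
        \<le> \<bar>poly (smult C ([:real M, \<rho>:] ^ (M - 1))) (real n)\<bar> * q ^ n"
      by (simp add: N_def)
  qed (use \<open>0 < q\<close> \<open>q < 1\<close> in auto)
qed

end

lemma powr_exp_kernel_exists:
  fixes k :: "real \<Rightarrow> real"
  assumes k: "k \<in> borel_measurable (lebesgue_on {0..1})" and "c > 0" "r > -1"
    and lower: "\<And>t. t \<in> {0<..1} \<Longrightarrow> c * t powr r * exp (\<mu> * t) \<le> k t"
    and upper: "\<And>t. t \<in> {0<..1} \<Longrightarrow> k t \<le> c * t powr r * exp (\<nu> * t)"
  obtains kb where "powr_exp_kernel k kb c r \<mu> \<nu>"
proof -
  obtain kb where "kb \<in> borel_measurable borel"
    and between: "\<And>t. t \<in> {0<..1} \<Longrightarrow> c * t powr r * exp (\<mu> * t) \<le> kb t \<and> kb t \<le> c * t powr r * exp (\<nu> * t)"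
    and outside: "\<And>t. t \<notin> {0<..1} \<Longrightarrow> kb t = 0" and "AE x in lborel. x \<in> {0<..1} \<longrightarrow> k x = kb x"
    using borel_representative_between[OF k _ _ _ _ _ , where T = "{0<..1}"
        and f = "\<lambda>t. c * t powr r * exp (\<mu> * t)" and g = "\<lambda>t. c * t powr r * exp (\<nu> * t)"]
      lower upper by (auto simp: subset_eq)
  moreover have "powr_exp_bounds \<mu> \<nu> r c c kb"
    unfolding powr_exp_bounds_def
  proof
    fix t :: real
    assume "t \<in> {0..1}"
    then consider "t = 0" | "t \<in> {0<..1}"
      by fastforce
    then show "c * t powr r * exp (\<mu> * t) \<le> kb t \<and> kb t \<le> c * t powr r * exp (\<nu> * t)"
      by cases (simp_all add: outside between)
  qed
  ultimately show ?thesis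
    using that assms(2,3) by (simp add: powr_exp_kernel_def)
qed

theorem lemma4p1:
  fixes k :: "real \<Rightarrow> real" and c \<mu> \<nu> r :: real and p :: ereal
    and \<delta> :: real and j :: nat and P :: "real poly"
  assumes k_meas: "k \<in> borel_measurable (lebesgue_on {0..1})"
    and c_pos: "c > 0" and r_gt: "r > -1"
    and lower: "\<And>t. t \<in> {0<..1} \<Longrightarrow> c * t powr r * exp (\<mu> * t) \<le> k t"
    and upper: "\<And>t. t \<in> {0<..1} \<Longrightarrow> k t \<le> c * t powr r * exp (\<nu> * t)"
    and p_ge: "1 \<le> p"
    and delta: "0 < \<delta>" "\<delta> < 1"
  shows "((\<lambda>n. poly P (real n)
              * set_lebesgue_integral lebesgue {0..1 - \<delta>} (conv_pow k (n - j))
              / real_of_ereal (op_norm p (volterra k ^^ n))) \<longlonglongrightarrow> 0)"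
proof -
  obtain kb where "powr_exp_kernel k kb c r \<mu> \<nu>"
    using powr_exp_kernel_exists[OF k_meas c_pos r_gt lower upper] .
  then interpret powr_exp_kernel k kb c r \<mu> \<nu> .
  obtain Q q where "0 < q" "q < 1" and bound: "\<And>n. n \<ge> j + 2 \<Longrightarrow>
      \<bar>(LINT t:{0..1 - \<delta>}|lebesgue. conv_pow k (n - j) t) / real_of_ereal (op_norm p (volterra k ^^ n))\<bar>
        \<le> \<bar>poly Q (real n)\<bar> * q ^ n"
    using integral_conv_pow_div_op_norm_le[OF p_ge delta] by blast
  have "(\<lambda>n. poly P (real n) * ((LINT t:{0..1 - \<delta>}|lebesgue. conv_pow k (n - j) t)
      / real_of_ereal (op_norm p (volterra k ^^ n)))) \<longlonglongrightarrow> 0"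
    using \<open>0 < q\<close> \<open>q < 1\<close> bound
    by (intro poly_mult_tendsto_0_of_poly_geometric_bound[where Q = Q]) (auto simp: eventually_at_top_linorder)
  then show ?thesis
    by simp
qed

end
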